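(* Let $(X\cup Y,\mathbf{d})$ be a finite metric space and let $\epsilon \in (0,\frac{1}{2})$. For every $x\in X$ let $N_x$ be an $\epsilon \cdot \mathbf{d}(x,Y)$-net of $B_Y(\pi_Y(x), \mathbf{d}(x,Y)/\epsilon)$ with $\pi_Y(x)\in N_x$. For all $x\in X$ and $y\in Y$ define $\widehat{\mathbf{d}}(x,y) = \min_{u\in N_x} \mathbf{d}(x,u) + \mathbf{d}(u,y)$. Then for all $x\in X$ and $y\in Y$, \[ \mathbf{d}(x,y) \le \widehat{\mathbf{d}}(x,y) \le (1+4 \epsilon) \cdot \mathbf{d}(x,y). \]
   Context: For $S\subseteq X\cup Y$, $x\in X\cup Y$ and $r>0$, $B_S(x,r)=\{y\in S:\mathbf{d}(x,y)\le r\}$. $\pi_S(x)$ denotes a point of $S$ closest to $x$, and $\mathbf{d}(x,S)=\mathbf{d}(x,\pi_S(x))$. For $\rho>0$, a $\rho$-net of a set $B$ is a subset $N\subseteq B$ such that any two distinct points of $N$ are at distance at least $\rho$ and every point of $B$ is within distance $\rho$ of some point of $N$. *)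

theory Defs
  imports "HOL-Analysis.Analysis"
begin

definition ball_in :: "'a::metric_space set \<Rightarrow> 'a \<Rightarrow> real \<Rightarrow> 'a set" where
  "ball_in S x r = {y \<in> S. dist x y \<le> r}"

definition is_net :: "real \<Rightarrow> 'a::metric_space set \<Rightarrow> 'a set \<Rightarrow> bool" where
  "is_net \<rho> B N \<longleftrightarrow> N \<subseteq> B \<and>
     (\<forall>a\<in>N. \<forall>b\<in>N. a \<noteq> b \<longrightarrow> \<rho> \<le> dist a b) \<and>
     (\<forall>b\<in>B. \<exists>a\<in>N. dist b a \<le> \<rho>)"

definition closest_in :: "'a::metric_space set \<Rightarrow> 'a \<Rightarrow> 'a \<Rightarrow> bool" where
  "closest_in S x c \<longleftrightarrow> c \<in> S \<and> (\<forall>y\<in>S. dist x c \<le> dist x y)"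

end

theory Submission
  imports Defs
begin

text \<open>
  Let \<open>D = d(x, \<pi>(x))\<close>. The lower bound is the triangle inequality. For the upper bound,
  if \<open>y\<close> lies in the ball \<open>B_Y(\<pi>(x), D/\<epsilon>)\<close>, some net point \<open>u\<close> is within \<open>\<epsilon>D \<le> \<epsilon> d(x,y)\<close>
  of \<open>y\<close>, and the detour through \<open>u\<close> costs at most \<open>2\<epsilon> d(x,y)\<close>. Otherwise \<open>y\<close> is so far
  from \<open>\<pi>(x)\<close> that \<open>D \<le> 2\<epsilon> d(x,y)\<close>, and the detour through \<open>\<pi>(x) \<in> N_x\<close> costs at most
  \<open>2D \<le> 4\<epsilon> d(x,y)\<close>.
\<close>

definition net_dist :: "'a::metric_space set \<Rightarrow> 'a \<Rightarrow> 'a \<Rightarrow> real" where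
  "net_dist N x y = Min ((\<lambda>u. dist x u + dist u y) ` N)"

lemma dist_le_net_dist:
  assumes "finite N" and "N \<noteq> {}"
  shows "dist x y \<le> net_dist N x y"
  unfolding net_dist_def using assms by (simp add: dist_triangle)

lemma net_dist_le_via:
  assumes "finite N" and "u \<in> N"
  shows "net_dist N x y \<le> dist x u + dist u y"
  unfolding net_dist_def using assms by (intro Min_le) auto

lemma net_dist_le_via_near:
  assumes "finite N" and "u \<in> N" and "dist u y \<le> \<delta>"
  shows "net_dist N x y \<le> dist x y + 2 * \<delta>"
proof -
  have "net_dist N x y \<le> dist x u + dist u y"
    using assms(1,2) by (rule net_dist_le_via)
  also have "\<dots> \<le> dist x y + 2 * dist u y"
    using dist_triangle[of x u y] dist_commute[of y u] by linarith
  finally show ?thesis using assms(3) by linarith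
qed

lemma dist_le_two_eps_dist_if_far:
  assumes "0 \<le> \<epsilon>" and "\<epsilon> \<le> 1/2" and far: "dist x p \<le> \<epsilon> * dist p y"
  shows "dist x p \<le> 2 * \<epsilon> * dist x y"
proof -
  have "\<epsilon> * dist p y \<le> \<epsilon> * (dist x p + dist x y)"
    using assms(1) dist_triangle3[of p y x] by (intro mult_left_mono) auto
  with far have "(1 - \<epsilon>) * dist x p \<le> \<epsilon> * dist x y"
    by (simp add: algebra_simps)
  moreover have "dist x p \<le> 2 * ((1 - \<epsilon>) * dist x p)"
    using mult_right_mono[of "2 * \<epsilon>" 1 "dist x p"] assms(2) by (simp add: algebra_simps)
  ultimately show ?thesis by linarith
qed

lemma net_dist_le_closest_net:
  assumes "finite Y" and "0 < \<epsilon>" and "\<epsilon> < 1/2"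
    and closest: "closest_in Y x p"
    and net: "is_net (\<epsilon> * dist x p) (ball_in Y p (dist x p / \<epsilon>)) N" and "p \<in> N"
    and "y \<in> Y"
  shows "net_dist N x y \<le> (1 + 4 * \<epsilon>) * dist x y"
proof -
  have "N \<subseteq> Y"
    using net unfolding is_net_def ball_in_def by auto
  with \<open>finite Y\<close> have "finite N"
    by (rule finite_subset[rotated])
  have "dist x p \<le> dist x y"
    using closest \<open>y \<in> Y\<close> unfolding closest_in_def by auto
  show ?thesis
  proof (cases "dist p y \<le> dist x p / \<epsilon>")
    case True
    then obtain u where "u \<in> N" and "dist y u \<le> \<epsilon> * dist x p"
      using net \<open>y \<in> Y\<close> unfolding is_net_def ball_in_def by auto
    then have "net_dist N x y \<le> dist x y + 2 * (\<epsilon> * dist x p)"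
      using \<open>finite N\<close> by (intro net_dist_le_via_near) (auto simp: dist_commute)
    also have "\<dots> \<le> (1 + 4 * \<epsilon>) * dist x y"
    proof -
      have "\<epsilon> * dist x p \<le> \<epsilon> * dist x y"
        using \<open>dist x p \<le> dist x y\<close> \<open>0 < \<epsilon>\<close> by simp
      moreover have "0 \<le> \<epsilon> * dist x y"
        using \<open>0 < \<epsilon>\<close> by simp
      ultimately show ?thesis by (simp add: algebra_simps)
    qed
    finally show ?thesis .
  next
    case False
    then have "dist x p \<le> \<epsilon> * dist p y"
      using \<open>0 < \<epsilon>\<close> by (simp add: field_simps)
    then have "dist x p \<le> 2 * \<epsilon> * dist x y"
      using \<open>0 < \<epsilon>\<close> \<open>\<epsilon> < 1/2\<close> by (intro dist_le_two_eps_dist_if_far) auto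
    have "net_dist N x y \<le> dist x p + dist p y"
      using \<open>finite N\<close> \<open>p \<in> N\<close> by (rule net_dist_le_via)
    also have "\<dots> \<le> 2 * dist x p + dist x y"
      using dist_triangle3[of p y x] by linarith
    finally show ?thesis
      using \<open>dist x p \<le> 2 * \<epsilon> * dist x y\<close> by (simp add: algebra_simps)
  qed
qed

theorem lemma1p6:
  fixes X Y :: "'a::metric_space set" and \<epsilon> :: real
    and \<pi> :: "'a \<Rightarrow> 'a" and N :: "'a \<Rightarrow> 'a set"
    and dhat :: "'a \<Rightarrow> 'a \<Rightarrow> real"
  assumes "finite X" and "finite Y" and "Y \<noteq> {}"
    and "0 < \<epsilon>" and "\<epsilon> < 1/2"
    and "\<forall>x\<in>X. closest_in Y x (\<pi> x)"
    and "\<forall>x\<in>X. is_net (\<epsilon> * dist x (\<pi> x)) (ball_in Y (\<pi> x) (dist x (\<pi> x) / \<epsilon>)) (N x)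
                 \<and> \<pi> x \<in> N x"
    and "\<forall>x\<in>X. \<forall>y\<in>Y. dhat x y = Min ((\<lambda>u. dist x u + dist u y) ` N x)"
  shows "\<forall>x\<in>X. \<forall>y\<in>Y. dist x y \<le> dhat x y \<and> dhat x y \<le> (1 + 4 * \<epsilon>) * dist x y"
proof (intro ballI)
  fix x y assume "x \<in> X" and "y \<in> Y"
  have net: "is_net (\<epsilon> * dist x (\<pi> x)) (ball_in Y (\<pi> x) (dist x (\<pi> x) / \<epsilon>)) (N x)"
    and "\<pi> x \<in> N x"
    using assms(7) \<open>x \<in> X\<close> by auto
  have dhat: "dhat x y = net_dist (N x) x y"
    using assms(8) \<open>x \<in> X\<close> \<open>y \<in> Y\<close> unfolding net_dist_def by auto
  have "finite (N x)"
    using net \<open>finite Y\<close> unfolding is_net_def ball_in_def by (auto intro: finite_subset)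
  then have "dist x y \<le> dhat x y"
    unfolding dhat using \<open>\<pi> x \<in> N x\<close> by (intro dist_le_net_dist) auto
  moreover have "dhat x y \<le> (1 + 4 * \<epsilon>) * dist x y"
    unfolding dhat using assms(2,4,5,6) \<open>x \<in> X\<close> net \<open>\<pi> x \<in> N x\<close> \<open>y \<in> Y\<close>
    by (intro net_dist_le_closest_net) auto
  ultimately show "dist x y \<le> dhat x y \<and> dhat x y \<le> (1 + 4 * \<epsilon>) * dist x y" ..
qed

end
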